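(* Let $M$ be a smooth manifold, $g$ a Riemannian metric, $b$ a $2$-form and $\alpha$ a $1$-form on $M$. Let $V^+=\{X+gX+bX : X\in TM\}$ and $V^+_{d\alpha}=\{X+gX+bX+\iota_Xd\alpha : X\in TM\}$ be the generalized metrics determined by $(g,b)$ and $(g,b+d\alpha)$ respectively. Then the induced affine connections $\nabla^+$ and $\nabla^{+,d\alpha}$ on $TM$ coincide.
   Context: $E=TM\oplus T^*M$ has sections $X+\xi$, projection $\pi:E\to TM$, and Courant bracket $[X+\xi,Y+\eta]_C=[X,Y]+\mathcal L_X\eta-\mathcal L_Y\xi-\tfrac12 d(\iota_X\eta-\iota_Y\xi)$. For a Riemannian metric $g$ and $2$-form $b$ (viewed as maps $TM\to T^*M$), the generalized metric of $(g,b)$ is $G=\begin{pmatrix}-g^{-1}b & g^{-1}\\ g-bg^{-1}b & bg^{-1}\end{pmatrix}$, with $\pm1$-eigenbundles $V^\pm=\{X\pm gX+bX\}$; put $X^\pm=X\pm gX+bX$ and $e_\pm=\tfrac12(\mathrm{Id}\pm G)e$. The induced affine connection is $\nabla^+_XY=\pi(([X^-,Y^+]_C)_+)$. *)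

theory Defs
  imports "HOL-Analysis.Analysis"
begin

text \<open>Local-coordinate model: the manifold is an open set U of real^'n (a chart domain).
  Vector fields and 1-forms are maps U -> real^'n (components in the coordinate
  (co)frame); bilinear forms (g, b) are matrix-valued maps, with entry $ i $ j = value on
  (e_i, e_j).  Sections of E = TM + T*M are pairs (vector field, 1-form).\<close>

type_synonym 'n vf = "real^'n \<Rightarrow> real^'n"
type_synonym 'n mf = "real^'n \<Rightarrow> real^'n^'n"
type_synonym 'n sec = "'n vf \<times> 'n vf"

definition pd :: "'n::finite \<Rightarrow> (real^'n \<Rightarrow> real) \<Rightarrow> real^'n \<Rightarrow> real" where
  "pd i f x = frechet_derivative f (at x) (axis i 1)"

fun C_k :: "nat \<Rightarrow> (real^'n::finite) set \<Rightarrow> (real^'n \<Rightarrow> real) \<Rightarrow> bool" where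
  "C_k 0 U f = continuous_on U f"
| "C_k (Suc k) U f = ((\<forall>x\<in>U. f differentiable (at x)) \<and> (\<forall>i. C_k k U (pd i f)))"

definition smooth_fun :: "(real^'n::finite) set \<Rightarrow> (real^'n \<Rightarrow> real) \<Rightarrow> bool" where
  "smooth_fun U f = (\<forall>k. C_k k U f)"

definition smooth_vf :: "(real^'n::finite) set \<Rightarrow> 'n vf \<Rightarrow> bool" where
  "smooth_vf U F = (\<forall>k. smooth_fun U (\<lambda>x. F x $ k))"

definition smooth_mf :: "(real^'n::finite) set \<Rightarrow> 'n mf \<Rightarrow> bool" where
  "smooth_mf U A = (\<forall>i j. smooth_fun U (\<lambda>x. A x $ i $ j))"

text \<open>A bilinear form A viewed as a map TM -> T*M: X |-> A(X, -) = iota_X A.\<close>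
definition flat :: "real^'n^'n \<Rightarrow> real^'n \<Rightarrow> real^'n::finite" where
  "flat A X = X v* A"

definition sharp :: "real^'n^'n \<Rightarrow> real^'n \<Rightarrow> real^'n::finite" where
  "sharp A \<xi> = \<xi> v* matrix_inv A"

definition dfun :: "(real^'n \<Rightarrow> real) \<Rightarrow> real^'n \<Rightarrow> real^'n::finite" where
  "dfun f x = (\<chi> j. pd j f x)"

definition dform1 :: "'n::finite vf \<Rightarrow> 'n mf" where
  "dform1 \<alpha> x = (\<chi> i j. pd i (\<lambda>y. \<alpha> y $ j) x - pd j (\<lambda>y. \<alpha> y $ i) x)"

definition lie_bracket :: "'n::finite vf \<Rightarrow> 'n vf \<Rightarrow> 'n vf" where
  "lie_bracket X Y x = (\<chi> k. \<Sum>i\<in>UNIV. X x $ i * pd i (\<lambda>y. Y y $ k) x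
                                      - Y x $ i * pd i (\<lambda>y. X y $ k) x)"

definition lie_deriv :: "'n::finite vf \<Rightarrow> 'n vf \<Rightarrow> 'n vf" where
  "lie_deriv X \<eta> x = (\<chi> j. \<Sum>i\<in>UNIV. X x $ i * pd i (\<lambda>y. \<eta> y $ j) x
                                      + \<eta> x $ i * pd j (\<lambda>y. X y $ i) x)"

definition courant :: "'n::finite sec \<Rightarrow> 'n sec \<Rightarrow> 'n sec" where
  "courant e1 e2 = (case e1 of (X, \<xi>) \<Rightarrow> case e2 of (Y, \<eta>) \<Rightarrow>
     (lie_bracket X Y,
      \<lambda>x. lie_deriv X \<eta> x - lie_deriv Y \<xi> x
           - (1/2) *\<^sub>R dfun (\<lambda>y. X y \<bullet> \<eta> y - Y y \<bullet> \<xi> y) x))"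

text \<open>Generalized metric of (g,b) acting on a fibre element v + xi, matrix
  [[-g^{-1} b, g^{-1}], [g - b g^{-1} b, b g^{-1}]].\<close>
definition gen_metric :: "real^'n^'n \<Rightarrow> real^'n^'n \<Rightarrow> ((real^'n) \<times> (real^'n)) \<Rightarrow> ((real^'n) \<times> (real^'n::finite))" where
  "gen_metric g b e = (case e of (v, \<xi>) \<Rightarrow>
     (- sharp g (flat b v) + sharp g \<xi>,
      flat g v - flat b (sharp g (flat b v)) + flat b (sharp g \<xi>)))"

definition plus_part :: "real^'n^'n \<Rightarrow> real^'n^'n \<Rightarrow> ((real^'n) \<times> (real^'n)) \<Rightarrow> ((real^'n) \<times> (real^'n::finite))" where
  "plus_part g b e = (case e of (v, \<xi>) \<Rightarrow> case gen_metric g b e of (w, \<zeta>) \<Rightarrow>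
     ((1/2) *\<^sub>R (v + w), (1/2) *\<^sub>R (\<xi> + \<zeta>)))"

definition lift_plus :: "'n::finite mf \<Rightarrow> 'n mf \<Rightarrow> 'n vf \<Rightarrow> 'n sec" where
  "lift_plus g b X = (X, \<lambda>x. flat (g x) (X x) + flat (b x) (X x))"

definition lift_minus :: "'n::finite mf \<Rightarrow> 'n mf \<Rightarrow> 'n vf \<Rightarrow> 'n sec" where
  "lift_minus g b X = (X, \<lambda>x. - flat (g x) (X x) + flat (b x) (X x))"

definition nabla_plus :: "'n::finite mf \<Rightarrow> 'n mf \<Rightarrow> 'n vf \<Rightarrow> 'n vf \<Rightarrow> 'n vf" where
  "nabla_plus g b X Y x =
     (let e = courant (lift_minus g b X) (lift_plus g b Y)
      in fst (plus_part (g x) (b x) (fst e x, snd e x)))"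

definition riemannian_metric_on :: "(real^'n::finite) set \<Rightarrow> 'n mf \<Rightarrow> bool" where
  "riemannian_metric_on U g = (smooth_mf U g \<and>
     (\<forall>x\<in>U. transpose (g x) = g x \<and> (\<forall>v. v \<noteq> 0 \<longrightarrow> v \<bullet> (g x *v v) > 0)))"

definition two_form_on :: "(real^'n::finite) set \<Rightarrow> 'n mf \<Rightarrow> bool" where
  "two_form_on U b = (smooth_mf U b \<and> (\<forall>x\<in>U. transpose (b x) = - b x))"

end

theory Submission
  imports Defs
begin

text \<open>The B-transform \<open>e\<^sup>B : X + \<xi> \<mapsto> X + \<xi> + \<iota>\<^sub>X B\<close> by a closed 2-form \<open>B\<close> is an
  automorphism of the Courant bracket. For \<open>B = d\<alpha>\<close> it maps the lifts \<open>X\<^sup>\<plusminus>\<close> of \<open>(g, b)\<close>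
  to those of \<open>(g, b + B)\<close> and conjugates the generalized metric of \<open>(g, b)\<close> into that of
  \<open>(g, b + B)\<close>, hence also the projections \<open>e \<mapsto> e\<^sub>+\<close>. Since \<open>e\<^sup>B\<close> does not change the
  vector part, \<open>\<pi>\<close> sees the same vector field in both cases. Closedness of \<open>d\<alpha>\<close> is the symmetry
  of second partial derivatives.\<close>

lemma pd_has_derivative: "(f has_derivative f') (at x) \<Longrightarrow> pd i f x = f' (axis i 1)"
  unfolding pd_def using frechet_derivative_at by metis

lemma has_derivative_frechet_derivative:
  "f differentiable at x \<Longrightarrow> (f has_derivative frechet_derivative f (at x)) (at x)"
  using frechet_derivative_works by blast

lemma pd_add:
  assumes "f differentiable at x" "g differentiable at x"
  shows "pd i (\<lambda>y. f y + g y) x = pd i f x + pd i g x"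
  using pd_has_derivative[OF has_derivative_add[OF assms[THEN has_derivative_frechet_derivative]]]
  by (simp add: pd_def)

lemma pd_diff:
  assumes "f differentiable at x" "g differentiable at x"
  shows "pd i (\<lambda>y. f y - g y) x = pd i f x - pd i g x"
  using pd_has_derivative[OF has_derivative_diff[OF assms[THEN has_derivative_frechet_derivative]]]
  by (simp add: pd_def)

lemma pd_minus:
  assumes "f differentiable at x"
  shows "pd i (\<lambda>y. - f y) x = - pd i f x"
  using pd_has_derivative[OF has_derivative_minus[OF assms[THEN has_derivative_frechet_derivative]]]
  by (simp add: pd_def)

lemma pd_mult:
  fixes f g :: "real^'n::finite \<Rightarrow> real"
  assumes "f differentiable at x" "g differentiable at x"
  shows "pd i (\<lambda>y. f y * g y) x = f x * pd i g x + pd i f x * g x"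
  using pd_has_derivative[OF has_derivative_mult[OF assms[THEN has_derivative_frechet_derivative]]]
  by (simp add: pd_def)

lemma pd_sum:
  assumes "\<And>k. k \<in> S \<Longrightarrow> f k differentiable at x"
  shows "pd i (\<lambda>y. \<Sum>k\<in>S. f k y) x = (\<Sum>k\<in>S. pd i (f k) x)"
  using pd_has_derivative[OF has_derivative_sum[OF has_derivative_frechet_derivative[OF assms]]]
  by (simp add: pd_def)

lemma has_real_derivative_along_line:
  fixes f :: "real^'n::finite \<Rightarrow> real"
  assumes "f differentiable at (p + t *\<^sub>R v)"
  shows "((\<lambda>s. f (p + s *\<^sub>R v)) has_real_derivative frechet_derivative f (at (p + t *\<^sub>R v)) v) (at t)"
proof -
  let ?f' = "frechet_derivative f (at (p + t *\<^sub>R v))"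
  have line: "((\<lambda>s. p + s *\<^sub>R v) has_derivative (\<lambda>s. s *\<^sub>R v)) (at t)"
    by (auto intro!: derivative_eq_intros)
  have "((\<lambda>s. f (p + s *\<^sub>R v)) has_derivative (\<lambda>s. ?f' (s *\<^sub>R v))) (at t)"
    using diff_chain_at[OF line has_derivative_frechet_derivative[OF assms]] by (simp add: o_def)
  moreover have "linear ?f'"
    using has_derivative_frechet_derivative[OF assms] has_derivative_linear by blast
  moreover have "(\<lambda>s. s * c) = (*) c" for c :: real
    by (auto simp: mult.commute)
  ultimately show ?thesis
    unfolding has_field_derivative_def by (simp add: linear_scale)
qed

lemma dist_axis_combination:
  "dist (x + s *\<^sub>R axis i 1 + t *\<^sub>R axis j 1) x \<le> \<bar>s\<bar> + \<bar>t\<bar>" for x :: "real^'n::finite"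
  using norm_triangle_ineq[of "s *\<^sub>R axis i (1::real)" "t *\<^sub>R axis j (1::real)"]
  by (simp add: dist_norm add.assoc)

lemma second_difference_mean_value:
  fixes f :: "real^'n::finite \<Rightarrow> real"
  assumes U: "cball x (2 * h) \<subseteq> U" and h: "0 < h"
    and df: "\<forall>y\<in>U. f differentiable at y" and dfi: "\<forall>y\<in>U. pd i f differentiable at y"
  shows "\<exists>\<sigma> \<tau>. 0 < \<sigma> \<and> \<sigma> < h \<and> 0 < \<tau> \<and> \<tau> < h \<and>
     f (x + h *\<^sub>R axis i 1 + h *\<^sub>R axis j 1) - f (x + h *\<^sub>R axis i 1) - f (x + h *\<^sub>R axis j 1) + f x
      = h * h * pd j (pd i f) (x + \<sigma> *\<^sub>R axis i 1 + \<tau> *\<^sub>R axis j 1)"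
proof -
  define ei :: "real^'n" where "ei = axis i 1"
  define ej :: "real^'n" where "ej = axis j 1"
  have inU: "x + s *\<^sub>R ei + t *\<^sub>R ej \<in> U" if "0 \<le> s" "s \<le> h" "0 \<le> t" "t \<le> h" for s t
  proof -
    have "dist (x + s *\<^sub>R ei + t *\<^sub>R ej) x \<le> 2 * h"
      using dist_axis_combination[of x s i t j] that by (simp add: ei_def ej_def)
    then show ?thesis using U by (auto simp: dist_commute)
  qed
  define u where "u s = f (x + h *\<^sub>R ej + s *\<^sub>R ei) - f (x + s *\<^sub>R ei)" for s
  have du: "DERIV u s :> pd i f (x + h *\<^sub>R ej + s *\<^sub>R ei) - pd i f (x + s *\<^sub>R ei)"
    if "0 \<le> s" "s \<le> h" for s
  proof -
    have "x + h *\<^sub>R ej + s *\<^sub>R ei \<in> U" "x + s *\<^sub>R ei \<in> U"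
      using inU[of s h] inU[of s 0] that h by (simp_all add: add_ac)
    then show ?thesis unfolding u_def[abs_def] pd_def ei_def
      using df by (intro DERIV_diff has_real_derivative_along_line) (auto simp: ei_def)
  qed
  obtain \<sigma> where \<sigma>: "0 < \<sigma>" "\<sigma> < h"
    and "u h - u 0 = (h - 0) * (pd i f (x + h *\<^sub>R ej + \<sigma> *\<^sub>R ei) - pd i f (x + \<sigma> *\<^sub>R ei))"
    using MVT2[OF h du] by blast
  then have u_mvt: "u h - u 0 = h * (pd i f (x + \<sigma> *\<^sub>R ei + h *\<^sub>R ej) - pd i f (x + \<sigma> *\<^sub>R ei))"
    by (simp add: add.commute add.left_commute)
  define w where "w t = pd i f (x + \<sigma> *\<^sub>R ei + t *\<^sub>R ej)" for t
  have dw: "DERIV w t :> pd j (pd i f) (x + \<sigma> *\<^sub>R ei + t *\<^sub>R ej)" if "0 \<le> t" "t \<le> h" for t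
    unfolding w_def[abs_def] pd_def[of j] ej_def
    using inU[of \<sigma> t] that \<sigma> dfi by (intro has_real_derivative_along_line) (auto simp: ej_def)
  obtain \<tau> where \<tau>: "0 < \<tau>" "\<tau> < h"
    and w_mvt: "w h - w 0 = (h - 0) * pd j (pd i f) (x + \<sigma> *\<^sub>R ei + \<tau> *\<^sub>R ej)"
    using MVT2[OF h dw] by blast
  have "f (x + h *\<^sub>R ei + h *\<^sub>R ej) - f (x + h *\<^sub>R ei) - f (x + h *\<^sub>R ej) + f x = u h - u 0"
    by (simp add: u_def add.commute add.left_commute)
  also have "\<dots> = h * (w h - w 0)"
    using u_mvt by (simp add: w_def)
  also have "\<dots> = h * h * pd j (pd i f) (x + \<sigma> *\<^sub>R ei + \<tau> *\<^sub>R ej)"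
    using w_mvt by simp
  finally show ?thesis using \<sigma> \<tau> unfolding ei_def ej_def by blast
qed

lemma pd_commute:
  fixes f :: "real^'n::finite \<Rightarrow> real"
  assumes U: "open U" "x \<in> U" and df: "\<forall>y\<in>U. f differentiable at y"
    and dfi: "\<forall>y\<in>U. pd i f differentiable at y" and dfj: "\<forall>y\<in>U. pd j f differentiable at y"
    and ci: "continuous_on U (pd j (pd i f))" and cj: "continuous_on U (pd i (pd j f))"
  shows "pd j (pd i f) x = pd i (pd j f) x"
proof -
  obtain r where r: "r > 0" "cball x r \<subseteq> U" using U open_contains_cball by blast
  have close: "\<bar>pd j (pd i f) x - pd i (pd j f) x\<bar> < 2 * e" if e: "e > 0" for e
  proof -
    obtain d1 where d1: "d1 > 0" "\<forall>y\<in>U. dist y x < d1 \<longrightarrow> dist (pd j (pd i f) y) (pd j (pd i f) x) < e"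
      using ci U(2) e unfolding continuous_on_iff by blast
    obtain d2 where d2: "d2 > 0" "\<forall>y\<in>U. dist y x < d2 \<longrightarrow> dist (pd i (pd j f) y) (pd i (pd j f) x) < e"
      using cj U(2) e unfolding continuous_on_iff by blast
    define h where "h = min r (min d1 d2) / 3"
    have h: "0 < h" "cball x (2 * h) \<subseteq> U" "2 * h < d1" "2 * h < d2"
      using r d1 d2 by (auto simp: h_def)
    obtain s1 t1 where st1: "0 < s1" "s1 < h" "0 < t1" "t1 < h" and
      eq1: "f (x + h *\<^sub>R axis i 1 + h *\<^sub>R axis j 1) - f (x + h *\<^sub>R axis i 1) - f (x + h *\<^sub>R axis j 1) + f x
        = h * h * pd j (pd i f) (x + s1 *\<^sub>R axis i 1 + t1 *\<^sub>R axis j 1)"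
      using second_difference_mean_value[OF h(2,1) df dfi] by blast
    obtain s2 t2 where st2: "0 < s2" "s2 < h" "0 < t2" "t2 < h" and
      eq2: "f (x + h *\<^sub>R axis j 1 + h *\<^sub>R axis i 1) - f (x + h *\<^sub>R axis j 1) - f (x + h *\<^sub>R axis i 1) + f x
        = h * h * pd i (pd j f) (x + s2 *\<^sub>R axis j 1 + t2 *\<^sub>R axis i 1)"
      using second_difference_mean_value[OF h(2,1) df dfj] by blast
    have "h * h * pd j (pd i f) (x + s1 *\<^sub>R axis i 1 + t1 *\<^sub>R axis j 1)
        = h * h * pd i (pd j f) (x + s2 *\<^sub>R axis j 1 + t2 *\<^sub>R axis i 1)"
      using eq1 eq2 by (simp only: add.commute add.left_commute)
    then have E: "pd j (pd i f) (x + s1 *\<^sub>R axis i 1 + t1 *\<^sub>R axis j 1)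
        = pd i (pd j f) (x + s2 *\<^sub>R axis j 1 + t2 *\<^sub>R axis i 1)"
      using h(1) by simp
    have near: "dist (x + s *\<^sub>R axis k 1 + t *\<^sub>R axis l 1) x < 2 * h \<and> x + s *\<^sub>R axis k 1 + t *\<^sub>R axis l 1 \<in> U"
      if "0 < s" "s < h" "0 < t" "t < h" for s t k l
      using dist_axis_combination[of x s k t l] that h(2) by (auto simp: dist_commute)
    have "dist (pd j (pd i f) (x + s1 *\<^sub>R axis i 1 + t1 *\<^sub>R axis j 1)) (pd j (pd i f) x) < e"
      using d1(2) near[OF st1, of i j] h(3) by simp
    moreover have "dist (pd i (pd j f) (x + s2 *\<^sub>R axis j 1 + t2 *\<^sub>R axis i 1)) (pd i (pd j f) x) < e"
      using d2(2) near[OF st2, of j i] h(4) by simp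
    ultimately show ?thesis
      using E by (simp add: dist_real_def)
  qed
  have "\<bar>pd j (pd i f) x - pd i (pd j f) x\<bar> \<le> 0"
    by (rule field_le_epsilon) (use close[of "_ / 2"] in fastforce)
  then show ?thesis by simp
qed

definition vf_differentiable_at :: "'n::finite vf \<Rightarrow> real^'n \<Rightarrow> bool" where
  "vf_differentiable_at Z x = (\<forall>i. (\<lambda>y. Z y $ i) differentiable at x)"

definition mf_differentiable_at :: "'n::finite mf \<Rightarrow> real^'n \<Rightarrow> bool" where
  "mf_differentiable_at A x = (\<forall>i j. (\<lambda>y. A y $ i $ j) differentiable at x)"

lemma vf_differentiable_at_add:
  "vf_differentiable_at Z x \<Longrightarrow> vf_differentiable_at W x \<Longrightarrow> vf_differentiable_at (\<lambda>y. Z y + W y) x"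
  unfolding vf_differentiable_at_def by simp

lemma vf_differentiable_at_minus:
  "vf_differentiable_at Z x \<Longrightarrow> vf_differentiable_at (\<lambda>y. - Z y) x"
  unfolding vf_differentiable_at_def by simp

lemma flat_component: "flat A v $ l = (\<Sum>k\<in>UNIV. v $ k * A $ k $ l)"
  by (simp add: flat_def vector_matrix_mult_def)

lemma flat_scaleR: "flat A (c *\<^sub>R v) = c *\<^sub>R flat A v"
  by (simp add: flat_def vec_eq_iff vector_matrix_mult_def sum_distrib_left algebra_simps)

lemma flat_add: "flat A (v + w) = flat A v + flat A w"
  by (simp add: flat_def vector_matrix_left_distrib)

lemma vf_differentiable_at_flat:
  "mf_differentiable_at A x \<Longrightarrow> vf_differentiable_at Z x \<Longrightarrow> vf_differentiable_at (\<lambda>y. flat (A y) (Z y)) x"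
  unfolding mf_differentiable_at_def vf_differentiable_at_def flat_component
  by (auto intro!: differentiable_sum)

lemma differentiable_at_inner:
  "vf_differentiable_at Z x \<Longrightarrow> vf_differentiable_at W x \<Longrightarrow> (\<lambda>y. Z y \<bullet> W y) differentiable at x"
  unfolding vf_differentiable_at_def inner_vec_def inner_real_def
  by (auto intro!: differentiable_sum)

lemma pd_inner:
  assumes "vf_differentiable_at Z x" "vf_differentiable_at W x"
  shows "pd p (\<lambda>y. Z y \<bullet> W y) x = (\<Sum>i\<in>UNIV. Z x $ i * pd p (\<lambda>y. W y $ i) x + pd p (\<lambda>y. Z y $ i) x * W x $ i)"
  using assms unfolding vf_differentiable_at_def inner_vec_def inner_real_def
  by (subst pd_sum) (auto simp: pd_mult algebra_simps)

lemma pd_flat: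
  assumes "mf_differentiable_at A x" "vf_differentiable_at Z x"
  shows "pd p (\<lambda>y. flat (A y) (Z y) $ j) x
    = (\<Sum>k\<in>UNIV. Z x $ k * pd p (\<lambda>y. A y $ k $ j) x + pd p (\<lambda>y. Z y $ k) x * A x $ k $ j)"
  using assms unfolding mf_differentiable_at_def vf_differentiable_at_def flat_component
  by (subst pd_sum) (auto simp: pd_mult)

lemma lie_deriv_add:
  assumes "vf_differentiable_at \<eta> x" "vf_differentiable_at \<zeta> x"
  shows "lie_deriv X (\<lambda>y. \<eta> y + \<zeta> y) x = lie_deriv X \<eta> x + lie_deriv X \<zeta> x"
  using assms unfolding vf_differentiable_at_def
  by (simp add: vec_eq_iff lie_deriv_def pd_add sum.distrib[symmetric] algebra_simps)

lemma dfun_add: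
  "f differentiable at x \<Longrightarrow> g differentiable at x \<Longrightarrow> dfun (\<lambda>y. f y + g y) x = dfun f x + dfun g x"
  by (simp add: vec_eq_iff dfun_def pd_add)

lemma smooth_fun_differentiable: "smooth_fun U f \<Longrightarrow> y \<in> U \<Longrightarrow> f differentiable at y"
  unfolding smooth_fun_def by (metis C_k.simps(2))

lemma smooth_fun_pd: "smooth_fun U f \<Longrightarrow> smooth_fun U (pd i f)"
  unfolding smooth_fun_def by (metis C_k.simps(2))

lemma smooth_fun_continuous_on: "smooth_fun U f \<Longrightarrow> continuous_on U f"
  unfolding smooth_fun_def by (metis C_k.simps(1))

lemma smooth_fun_pd_commute:
  assumes "open U" "x \<in> U" "smooth_fun U f"
  shows "pd j (pd i f) x = pd i (pd j f) x"
  by (rule pd_commute[OF assms(1,2)])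
    (use assms smooth_fun_differentiable smooth_fun_pd smooth_fun_continuous_on in blast)+

lemma smooth_vf_differentiable_at: "smooth_vf U Z \<Longrightarrow> x \<in> U \<Longrightarrow> vf_differentiable_at Z x"
  unfolding smooth_vf_def vf_differentiable_at_def using smooth_fun_differentiable by blast

lemma smooth_mf_differentiable_at: "smooth_mf U A \<Longrightarrow> x \<in> U \<Longrightarrow> mf_differentiable_at A x"
  unfolding smooth_mf_def mf_differentiable_at_def using smooth_fun_differentiable by blast

lemma sum_sum_antisym_eq_0:
  fixes F :: "'a \<Rightarrow> 'a \<Rightarrow> real"
  assumes "\<And>i k. F i k + F k i = 0"
  shows "(\<Sum>i\<in>S. \<Sum>k\<in>S. F i k) = 0"
proof -
  have "2 * (\<Sum>i\<in>S. \<Sum>k\<in>S. F i k) = (\<Sum>i\<in>S. \<Sum>k\<in>S. F i k) + (\<Sum>i\<in>S. \<Sum>k\<in>S. F k i)"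
    using sum.swap[of F S S] by simp
  also have "\<dots> = 0"
    using assms by (simp add: sum.distrib[symmetric])
  finally show ?thesis by simp
qed

definition dform2 :: "'n::finite mf \<Rightarrow> real^'n \<Rightarrow> 'n \<Rightarrow> 'n \<Rightarrow> 'n \<Rightarrow> real" where
  "dform2 B x i j k = pd i (\<lambda>y. B y $ j $ k) x + pd j (\<lambda>y. B y $ k $ i) x + pd k (\<lambda>y. B y $ i $ j) x"

lemma skew_component:
  assumes "transpose A = - A"
  shows "A $ k $ l = - A $ l $ k"
proof -
  have "transpose A $ l $ k = - A $ l $ k"
    using assms by simp
  then show ?thesis
    by (simp add: transpose_def)
qed

lemma pd_skew:
  assumes "\<And>y. transpose (B y) = - B y" "mf_differentiable_at B x"
  shows "pd p (\<lambda>y. B y $ k $ l) x = - pd p (\<lambda>y. B y $ l $ k) x"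
proof -
  have "(\<lambda>y. B y $ k $ l) = (\<lambda>y. - B y $ l $ k)"
    using skew_component[OF assms(1)] by blast
  moreover have "(\<lambda>y. B y $ l $ k) differentiable at x"
    using assms(2) unfolding mf_differentiable_at_def by blast
  ultimately show ?thesis
    by (simp add: pd_minus)
qed

lemma closed_two_form_courant_identity:
  fixes X Y :: "'n::finite vf" and B :: "'n mf"
  assumes dX: "vf_differentiable_at X x" and dY: "vf_differentiable_at Y x"
    and dB: "mf_differentiable_at B x"
    and skew: "\<And>y. transpose (B y) = - B y"
    and closed: "\<And>i j k. dform2 B x i j k = 0"
  shows "lie_deriv X (\<lambda>y. flat (B y) (Y y)) x - lie_deriv Y (\<lambda>y. flat (B y) (X y)) x
     - (1/2) *\<^sub>R dfun (\<lambda>y. X y \<bullet> flat (B y) (Y y) - Y y \<bullet> flat (B y) (X y)) x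
     = flat (B x) (lie_bracket X Y x)"
proof (subst vec_eq_iff, intro allI)
  fix j
  define xv where "xv i = X x $ i" for i
  define yv where "yv i = Y x $ i" for i
  define Bm where "Bm k l = B x $ k $ l" for k l
  define dXv where "dXv i p = pd p (\<lambda>y. X y $ i) x" for i p
  define dYv where "dYv i p = pd p (\<lambda>y. Y y $ i) x" for i p
  define dBv where "dBv p k l = pd p (\<lambda>y. B y $ k $ l) x" for p k l
  have BX: "vf_differentiable_at (\<lambda>y. flat (B y) (X y)) x"
    and BY: "vf_differentiable_at (\<lambda>y. flat (B y) (Y y)) x"
    using dB dX dY by (auto intro: vf_differentiable_at_flat)
  let ?L = "lie_deriv X (\<lambda>y. flat (B y) (Y y)) x - lie_deriv Y (\<lambda>y. flat (B y) (X y)) x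
     - (1/2) *\<^sub>R dfun (\<lambda>y. X y \<bullet> flat (B y) (Y y) - Y y \<bullet> flat (B y) (X y)) x"
  have L: "?L $ j =
      (\<Sum>i\<in>UNIV. xv i * (\<Sum>k\<in>UNIV. yv k * dBv i k j + dYv k i * Bm k j) + (\<Sum>k\<in>UNIV. yv k * Bm k i) * dXv i j)
    - (\<Sum>i\<in>UNIV. yv i * (\<Sum>k\<in>UNIV. xv k * dBv i k j + dXv k i * Bm k j) + (\<Sum>k\<in>UNIV. xv k * Bm k i) * dYv i j)
    - 1/2 * ((\<Sum>i\<in>UNIV. xv i * (\<Sum>k\<in>UNIV. yv k * dBv j k i + dYv k j * Bm k i) + dXv i j * (\<Sum>k\<in>UNIV. yv k * Bm k i))
           - (\<Sum>i\<in>UNIV. yv i * (\<Sum>k\<in>UNIV. xv k * dBv j k i + dXv k j * Bm k i) + dYv i j * (\<Sum>k\<in>UNIV. xv k * Bm k i)))"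
    using dX dY dB BX BY
    apply (simp add: lie_deriv_def dfun_def pd_diff differentiable_at_inner pd_inner pd_flat)
    apply (simp add: flat_component xv_def yv_def Bm_def dXv_def dYv_def dBv_def)
    done
  have "flat (B x) (lie_bracket X Y x) $ j = (\<Sum>k\<in>UNIV. (\<Sum>i\<in>UNIV. xv i * dYv k i - yv i * dXv k i) * Bm k j)"
    by (simp add: flat_component lie_bracket_def xv_def yv_def dXv_def dYv_def Bm_def)
  also have "\<dots> = (\<Sum>i\<in>UNIV. \<Sum>k\<in>UNIV. (xv i * dYv k i - yv i * dXv k i) * Bm k j)"
    unfolding sum_distrib_right by (rule sum.swap)
  finally have R: "flat (B x) (lie_bracket X Y x) $ j
      = (\<Sum>i\<in>UNIV. \<Sum>k\<in>UNIV. (xv i * dYv k i - yv i * dXv k i) * Bm k j)" .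
  define F where "F i k =
      xv i * (yv k * dBv i k j + dYv k i * Bm k j) + yv k * Bm k i * dXv i j
    - (yv i * (xv k * dBv i k j + dXv k i * Bm k j) + xv k * Bm k i * dYv i j)
    - 1/2 * ((xv i * (yv k * dBv j k i + dYv k j * Bm k i) + dXv i j * (yv k * Bm k i))
            - (yv i * (xv k * dBv j k i + dXv k j * Bm k i) + dYv i j * (xv k * Bm k i)))
    - (xv i * dYv k i - yv i * dXv k i) * Bm k j" for i k
  have skew_dB: "dBv p k l = - dBv p l k" for p k l
    unfolding dBv_def using pd_skew[OF skew dB] .
  have "F i k + F k i = 0" for i k
  proof -
    have "dBv i k j = dBv k i j + dBv j k i"
      using closed[of i k j] skew_dB[of k j i] skew_dB[of j i k] unfolding dform2_def dBv_def by linarith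
    moreover have "Bm i k = - Bm k i"
      unfolding Bm_def using skew_component[OF skew] .
    ultimately show ?thesis
      using skew_dB[of j i k] unfolding F_def by (simp add: algebra_simps)
  qed
  then have "(\<Sum>i\<in>UNIV. \<Sum>k\<in>UNIV. F i k) = 0"
    by (rule sum_sum_antisym_eq_0)
  moreover have "?L $ j - flat (B x) (lie_bracket X Y x) $ j = (\<Sum>i\<in>UNIV. \<Sum>k\<in>UNIV. F i k)"
    unfolding L R F_def
    by (simp add: sum_distrib_left sum_distrib_right sum.distrib sum_subtractf algebra_simps)
  ultimately show "?L $ j = flat (B x) (lie_bracket X Y x) $ j"
    by linarith
qed

lemma transpose_dform1: "transpose (dform1 \<alpha> y) = - dform1 \<alpha> y"
  by (simp add: vec_eq_iff transpose_def dform1_def)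

lemma smooth_vf_pd_differentiable:
  "smooth_vf U \<alpha> \<Longrightarrow> x \<in> U \<Longrightarrow> pd p (\<lambda>y. \<alpha> y $ l) differentiable at x"
  unfolding smooth_vf_def by (blast intro: smooth_fun_differentiable smooth_fun_pd)

lemma mf_differentiable_at_dform1:
  "smooth_vf U \<alpha> \<Longrightarrow> x \<in> U \<Longrightarrow> mf_differentiable_at (dform1 \<alpha>) x"
  unfolding mf_differentiable_at_def dform1_def
  by (auto intro!: differentiable_diff smooth_vf_pd_differentiable)

lemma dform2_dform1:
  assumes "open U" "smooth_vf U \<alpha>" "x \<in> U"
  shows "dform2 (dform1 \<alpha>) x i j k = 0"
proof -
  have "smooth_fun U (\<lambda>y. \<alpha> y $ l)" for l
    using assms(2) by (simp add: smooth_vf_def)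
  then show ?thesis
    using smooth_fun_pd_commute[OF assms(1,3)] smooth_vf_pd_differentiable[OF assms(2,3)]
    by (simp add: dform2_def dform1_def pd_diff)
qed

definition b_transform :: "real^'n^'n \<Rightarrow> (real^'n) \<times> (real^'n) \<Rightarrow> (real^'n) \<times> (real^'n::finite)" where
  "b_transform B e = (fst e, snd e + flat B (fst e))"

definition b_transform_sec :: "'n::finite mf \<Rightarrow> 'n sec \<Rightarrow> 'n sec" where
  "b_transform_sec B u = (fst u, \<lambda>y. snd u y + flat (B y) (fst u y))"

lemma gen_metric_b_transform:
  "gen_metric g (b + B) (b_transform B e) = b_transform B (gen_metric g b e)"
  by (simp add: gen_metric_def b_transform_def flat_def sharp_def split_beta algebra_simps)

lemma plus_part_b_transform:
  "plus_part g (b + B) (b_transform B e) = b_transform B (plus_part g b e)"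
  unfolding plus_part_def gen_metric_b_transform
  by (simp add: b_transform_def split_beta flat_scaleR flat_add algebra_simps)

lemma lift_plus_add: "lift_plus g (\<lambda>y. b y + B y) X = b_transform_sec B (lift_plus g b X)"
  by (simp add: lift_plus_def b_transform_sec_def flat_def algebra_simps)

lemma lift_minus_add: "lift_minus g (\<lambda>y. b y + B y) X = b_transform_sec B (lift_minus g b X)"
  by (simp add: lift_minus_def b_transform_sec_def flat_def algebra_simps)

lemma fst_courant: "fst (courant (X, \<xi>) (Y, \<eta>)) = lie_bracket X Y"
  by (simp add: courant_def)

lemma snd_courant_b_transform:
  fixes X Y \<xi> \<eta> :: "'n::finite vf" and B :: "'n mf"
  assumes X: "vf_differentiable_at X x" and Y: "vf_differentiable_at Y x"
    and \<xi>: "vf_differentiable_at \<xi> x" and \<eta>: "vf_differentiable_at \<eta> x"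
    and B: "mf_differentiable_at B x"
    and skew: "\<And>y. transpose (B y) = - B y"
    and closed: "\<And>i j k. dform2 B x i j k = 0"
  shows "snd (courant (b_transform_sec B (X, \<xi>)) (b_transform_sec B (Y, \<eta>))) x
    = snd (courant (X, \<xi>) (Y, \<eta>)) x + flat (B x) (lie_bracket X Y x)"
proof -
  have BX: "vf_differentiable_at (\<lambda>y. flat (B y) (X y)) x"
    and BY: "vf_differentiable_at (\<lambda>y. flat (B y) (Y y)) x"
    using B X Y by (auto intro: vf_differentiable_at_flat)
  have "(\<lambda>y. X y \<bullet> (\<eta> y + flat (B y) (Y y)) - Y y \<bullet> (\<xi> y + flat (B y) (X y)))
      = (\<lambda>y. (X y \<bullet> \<eta> y - Y y \<bullet> \<xi> y) + (X y \<bullet> flat (B y) (Y y) - Y y \<bullet> flat (B y) (X y)))"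
    by (simp add: inner_add_right algebra_simps)
  then have pairing: "dfun (\<lambda>y. X y \<bullet> (\<eta> y + flat (B y) (Y y)) - Y y \<bullet> (\<xi> y + flat (B y) (X y))) x
      = dfun (\<lambda>y. X y \<bullet> \<eta> y - Y y \<bullet> \<xi> y) x
        + dfun (\<lambda>y. X y \<bullet> flat (B y) (Y y) - Y y \<bullet> flat (B y) (X y)) x"
    using X Y \<xi> \<eta> BX BY by (simp add: dfun_add differentiable_diff differentiable_at_inner)
  have "snd (courant (b_transform_sec B (X, \<xi>)) (b_transform_sec B (Y, \<eta>))) x
    = snd (courant (X, \<xi>) (Y, \<eta>)) x
      + (lie_deriv X (\<lambda>y. flat (B y) (Y y)) x - lie_deriv Y (\<lambda>y. flat (B y) (X y)) x
         - (1/2) *\<^sub>R dfun (\<lambda>y. X y \<bullet> flat (B y) (Y y) - Y y \<bullet> flat (B y) (X y)) x)"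
    unfolding courant_def b_transform_sec_def prod.case fst_conv snd_conv pairing
      lie_deriv_add[OF \<eta> BY] lie_deriv_add[OF \<xi> BX]
    by (simp add: algebra_simps)
  also have "\<dots> = snd (courant (X, \<xi>) (Y, \<eta>)) x + flat (B x) (lie_bracket X Y x)"
    using closed_two_form_courant_identity[OF X Y B skew closed] by simp
  finally show ?thesis .
qed

lemma courant_b_transform:
  assumes "vf_differentiable_at (fst u) x" "vf_differentiable_at (snd u) x"
    and "vf_differentiable_at (fst v) x" "vf_differentiable_at (snd v) x"
    and "mf_differentiable_at B x" "\<And>y. transpose (B y) = - B y" "\<And>i j k. dform2 B x i j k = 0"
  shows "(fst (courant (b_transform_sec B u) (b_transform_sec B v)) x,
          snd (courant (b_transform_sec B u) (b_transform_sec B v)) x)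
       = b_transform (B x) (fst (courant u v) x, snd (courant u v) x)"
proof -
  obtain X \<xi> Y \<eta> where "u = (X, \<xi>)" "v = (Y, \<eta>)"
    by fastforce
  then show ?thesis
    using snd_courant_b_transform[of X x Y \<xi> \<eta> B] assms
    by (simp add: b_transform_def b_transform_sec_def fst_courant)
qed

lemma vf_differentiable_at_lifts:
  assumes "mf_differentiable_at g x" "mf_differentiable_at b x" "vf_differentiable_at X x"
  shows "vf_differentiable_at (snd (lift_plus g b X)) x"
    and "vf_differentiable_at (snd (lift_minus g b X)) x"
  unfolding lift_plus_def lift_minus_def snd_conv
  by (intro vf_differentiable_at_add vf_differentiable_at_minus vf_differentiable_at_flat assms)+

theorem proposition5p2p2:
  fixes U :: "(real^'n::finite) set"
    and g b :: "'n mf" and \<alpha> X Y :: "'n vf"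
  assumes "open U"
    and "riemannian_metric_on U g"
    and "two_form_on U b"
    and "smooth_vf U \<alpha>"
    and "smooth_vf U X" and "smooth_vf U Y"
    and "x \<in> U"
  shows "nabla_plus g (\<lambda>y. b y + dform1 \<alpha> y) X Y x = nabla_plus g b X Y x"
proof -
  have g: "mf_differentiable_at g x" and b: "mf_differentiable_at b x"
    using assms(2,3,7) smooth_mf_differentiable_at
    unfolding riemannian_metric_on_def two_form_on_def by blast+
  have X: "vf_differentiable_at X x" and Y: "vf_differentiable_at Y x"
    using assms(5-7) smooth_vf_differentiable_at by blast+
  have lifts: "vf_differentiable_at (fst (lift_minus g b X)) x"
    "vf_differentiable_at (snd (lift_minus g b X)) x"
    "vf_differentiable_at (fst (lift_plus g b Y)) x"
    "vf_differentiable_at (snd (lift_plus g b Y)) x"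
    using X Y vf_differentiable_at_lifts[OF g b]
    by (simp_all add: lift_minus_def lift_plus_def)
  have closed: "mf_differentiable_at (dform1 \<alpha>) x" "\<And>y. transpose (dform1 \<alpha> y) = - dform1 \<alpha> y"
    "\<And>i j k. dform2 (dform1 \<alpha>) x i j k = 0"
    using mf_differentiable_at_dform1[OF assms(4,7)] transpose_dform1 dform2_dform1[OF assms(1,4,7)]
    by blast+
  show ?thesis
    unfolding nabla_plus_def Let_def lift_minus_add lift_plus_add courant_b_transform[OF lifts closed]
      plus_part_b_transform
    by (simp add: b_transform_def)
qed

end
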